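(* The map $\psi$ maps $\Sigma(D_n)$ into $\Sigma(A_{n-1})$ and, for every $J\subseteq\{2,\dots,n-1\}$: $\psi(Y_J)=\sum_{F\in\mathcal{F}_n,\,F\subseteq J\triangle(J+1)}2^{\#F}P_F$; $\psi(Y_{\{1\}\cup J})=\psi(Y_{\{1'\}\cup J})=\sum_{\{1\}\cup F\in\mathcal{F}_n,\,F\subseteq J\triangle(J+1)}2^{\#F}P_{\{1\}\cup F}$; $\psi(Y_{\{1',1\}\cup J})=\sum_{F\in\mathcal{F}_n,\,F\subseteq J\triangle(\{2\}\cup(J+1))}2^{\#F}P_F$; and $\psi(X_J)=2^{\#J}\sum_{F\in\mathcal{F}_n,\,F\subseteq J\cup(J+1)}P_F$; $\psi(X_{\{1\}\cup J})=\psi(X_{\{1'\}\cup J})=2^{\#J}\sum_{F\in\mathcal{F}_n,\,F\subseteq J\cup(J+1)\cup\{1\}}P_F$; $\psi(X_{\{1',1\}\cup J})=2^{\#J+1}\sum_{F\in\mathcal{F}_n,\,F\subseteq J\cup(J+1)\cup\{1,2\}}P_F$.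
   Context: $D_n$: signed permutations $w=w_1\dots w_n$ of $[n]$ (values in $\{\pm1,\dots,\pm n\}$, ordered $\cdots<-2<-1<1<2<\cdots$) with an even number of negative entries; the descent set of $w$ is the subset of $\{1',1,\dots,n-1\}$ where $1'$ is a descent iff $-w_1>w_2$ and $i\in[n-1]$ is a descent iff $w_i>w_{i+1}$; $Y_J=\sum_{\mathrm{Des}(w)=J}w$, $X_J=\sum_{I\subseteq J}Y_I$, $\Sigma(D_n)=\mathrm{span}\{Y_J\}$. $\psi:\mathbb{Q}D_n\to\mathbb{Q}\mathfrak{S}_n$ is the linear extension of $w\mapsto|w_1|\dots|w_n|$. $\Sigma(A_{n-1})$ is the descent algebra of $\mathfrak{S}_n$ (span of $\sum_{\mathrm{Des}(u)=J}u$, $\mathrm{Des}(u)=\{i:u_i>u_{i+1}\}$). For $u\in\mathfrak{S}_n$, $\mathrm{Peak}(u)=\{i\in[n-1]:u_{i-1}<u_i>u_{i+1}\}$ with $u_0=0$; $\mathcal{F}_n$: subsets of $[n-1]$ with no two consecutive integers; $P_F=\sum_{\mathrm{Peak}(u)=F}u$. $J+1=\{j+1:j\in J\}$, $\triangle$ = symmetric difference. *)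

theory Defs
  imports Complex_Main
begin

(* Permutations of [n] in one-line notation u = u_1 ... u_n (u_i = u ! (i-1)). *)
definition perms :: "nat \<Rightarrow> nat list set" where
  "perms n = {u. distinct u \<and> set u = {1..n}}"

definition Dn :: "nat \<Rightarrow> int list set" where
  "Dn n = {w. distinct (map abs w) \<and> set (map abs w) = {1..int n}
              \<and> even (length (filter (\<lambda>x. x < 0) w))}"

(* Descent labels: 1' and the ordinary positions i. *)
datatype dlabel = OneP | Nd nat

definition dlabels :: "nat \<Rightarrow> dlabel set" where
  "dlabels n = insert OneP (Nd ` {1..n-1})"

definition DesD :: "nat \<Rightarrow> int list \<Rightarrow> dlabel set" where
  "DesD n w = (if - (w ! 0) > w ! 1 then {OneP} else {})
      \<union> {Nd i | i. i \<in> {1..n-1} \<and> w ! (i-1) > w ! i}"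

(* Elements of the group algebra Q D_n as coefficient functions int list => rat *)
definition Y :: "nat \<Rightarrow> dlabel set \<Rightarrow> int list \<Rightarrow> rat" where
  "Y n J w = (if w \<in> Dn n \<and> DesD n w = J then 1 else 0)"

definition X :: "nat \<Rightarrow> dlabel set \<Rightarrow> int list \<Rightarrow> rat" where
  "X n J w = (\<Sum>I\<in>Pow J. Y n I w)"

definition SigmaD :: "nat \<Rightarrow> (int list \<Rightarrow> rat) set" where
  "SigmaD n = {(\<lambda>w. \<Sum>J\<in>Pow (dlabels n). c J * Y n J w) | c. True}"

definition DesA :: "nat \<Rightarrow> nat list \<Rightarrow> nat set" where
  "DesA n u = {i \<in> {1..n-1}. u ! (i-1) > u ! i}"

definition B :: "nat \<Rightarrow> nat set \<Rightarrow> nat list \<Rightarrow> rat" where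
  "B n J u = (if u \<in> perms n \<and> DesA n u = J then 1 else 0)"

definition SigmaA :: "nat \<Rightarrow> (nat list \<Rightarrow> rat) set" where
  "SigmaA n = {(\<lambda>u. \<Sum>J\<in>Pow {1..n-1}. c J * B n J u) | c. True}"

(* psi: linear extension of w |-> |w_1| ... |w_n| *)
definition absl :: "int list \<Rightarrow> nat list" where
  "absl w = map (\<lambda>x. nat \<bar>x\<bar>) w"

definition psi :: "nat \<Rightarrow> (int list \<Rightarrow> rat) \<Rightarrow> nat list \<Rightarrow> rat" where
  "psi n f u = (\<Sum>w\<in>{w \<in> Dn n. absl w = u}. f w)"

(* Peaks, with the convention u_0 = 0 *)
definition uval :: "nat list \<Rightarrow> nat \<Rightarrow> nat" where
  "uval u i = (if i = 0 then 0 else u ! (i-1))"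

definition Peak :: "nat \<Rightarrow> nat list \<Rightarrow> nat set" where
  "Peak n u = {i \<in> {1..n-1}. uval u (i-1) < uval u i \<and> uval u i > uval u (i+1)}"

definition Fn :: "nat \<Rightarrow> nat set set" where
  "Fn n = {F. F \<subseteq> {1..n-1} \<and> (\<forall>i\<in>F. i + 1 \<notin> F)}"

definition P :: "nat \<Rightarrow> nat set \<Rightarrow> nat list \<Rightarrow> rat" where
  "P n F u = (if u \<in> perms n \<and> Peak n u = F then 1 else 0)"

definition shift1 :: "nat set \<Rightarrow> nat set" where
  "shift1 J = (\<lambda>j. j + 1) ` J"

definition symdiff :: "'a set \<Rightarrow> 'a set \<Rightarrow> 'a set" where
  "symdiff A C = (A - C) \<union> (C - A)"

end

theory Submission
  imports Defs
begin

(* The fibre of psi over u consists of the words obtained from u by negating the entries at an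
   even set N of positions. If D is the descent set of u, each descent label of such a word is
   decided by the membership of a single position in N. So psi(Y_S)(u) and psi(X_S)(u) count even
   sets N with prescribed members at certain positions: such a count is 0 if two prescriptions
   conflict and a power of 2 otherwise. Distinct labels share a position only at the peaks of u
   and for the pair 1', 1, which is why the answer is expressed through the peak set of u. *)

section \<open>Signed words over a permutation\<close>

lemma perms_length: "u \<in> perms n \<Longrightarrow> length u = n"
  unfolding perms_def by (metis (mono_tags) card_atLeastAtMost diff_Suc_1 distinct_card mem_Collect_eq)

lemma perms_nth_bounds: "u \<in> perms n \<Longrightarrow> k < n \<Longrightarrow> 1 \<le> u ! k \<and> u ! k \<le> n"
  using perms_length[of u n] nth_mem[of k u] unfolding perms_def by auto

lemma perms_nth_eq_iff: "u \<in> perms n \<Longrightarrow> i < n \<Longrightarrow> j < n \<Longrightarrow> u ! i = u ! j \<longleftrightarrow> i = j"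
  using perms_length[of u n] by (simp add: perms_def nth_eq_iff_index_eq)

definition sign_word :: "nat list \<Rightarrow> nat set \<Rightarrow> int list" where
  "sign_word u N = map (\<lambda>k. if Suc k \<in> N then - int (u ! k) else int (u ! k)) [0..<length u]"

lemma length_sign_word [simp]: "length (sign_word u N) = length u"
  by (simp add: sign_word_def)

lemma nth_sign_word [simp]:
  "k < length u \<Longrightarrow> sign_word u N ! k = (if Suc k \<in> N then - int (u ! k) else int (u ! k))"
  by (simp add: sign_word_def)

lemma absl_sign_word: "absl (sign_word u N) = u"
  by (rule nth_equalityI) (simp_all add: absl_def)

lemma map_abs_sign_word: "map abs (sign_word u N) = map int u"
  by (rule nth_equalityI) simp_all

lemma length_filter_neg_sign_word:
  assumes u: "u \<in> perms n" and N: "N \<subseteq> {1..n}"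
  shows "length (filter (\<lambda>x. x < 0) (sign_word u N)) = card N"
proof -
  have "{k. k < n \<and> sign_word u N ! k < 0} = (\<lambda>j. j - 1) ` N"
  proof -
    have "sign_word u N ! k < 0 \<longleftrightarrow> Suc k \<in> N" if "k < n" for k
      using perms_nth_bounds[OF u that] perms_length[OF u] that by simp
    then have "{k. k < n \<and> sign_word u N ! k < 0} = {k. k < n \<and> Suc k \<in> N}"
      by blast
    also have "\<dots> = (\<lambda>j. j - 1) ` N"
      using N by (force simp: image_iff)
    finally show ?thesis .
  qed
  moreover have "inj_on (\<lambda>j. j - 1) N"
    using N by (intro inj_on_diff_nat) auto
  ultimately show ?thesis
    using perms_length[OF u] by (simp add: length_filter_conv_card card_image)
qed

lemma Dn_length: "w \<in> Dn n \<Longrightarrow> length w = n"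
proof -
  assume "w \<in> Dn n"
  then have "distinct (map abs w)" "set (map abs w) = {1..int n}"
    unfolding Dn_def by auto
  then have "length (map abs w) = card {1..int n}"
    by (metis distinct_card)
  then show ?thesis by simp
qed

lemma sign_word_in_Dn:
  assumes u: "u \<in> perms n" and N: "N \<subseteq> {1..n}" "even (card N)"
  shows "sign_word u N \<in> Dn n"
proof -
  have "distinct (map int u)" "set (map int u) = {1..int n}"
    using u by (auto simp: perms_def distinct_map image_int_atLeastAtMost)
  then show ?thesis
    using length_filter_neg_sign_word[OF u N(1)] N(2)
    unfolding Dn_def mem_Collect_eq map_abs_sign_word by simp
qed

lemma absl_in_perms:
  assumes "w \<in> Dn n"
  shows "absl w \<in> perms n"
proof -
  have d: "distinct (map abs w)" and s: "set (map abs w) = {1..int n}"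
    using assms by (auto simp: Dn_def)
  have e: "absl w = map nat (map abs w)"
    by (simp add: absl_def)
  have "inj_on nat {1..int n}"
    by (auto simp: inj_on_def)
  then have "distinct (absl w)"
    using d s e distinct_map[of nat "map abs w"] by simp
  moreover have "nat ` {1..int n} = {1..n}"
    by (simp only: image_int_atLeastAtMost[of 1 n, simplified, symmetric] image_image nat_int)
      simp
  then have "set (absl w) = {1..n}"
    using s e by (simp only: set_map)
  ultimately show ?thesis
    by (simp add: perms_def)
qed

lemma Dn_eq_sign_word:
  assumes w: "w \<in> Dn n" and u: "absl w = u"
  shows "w = sign_word u {j \<in> {1..n}. w ! (j - 1) < 0}"
proof (rule nth_equalityI)
  show "length w = length (sign_word u {j \<in> {1..n}. w ! (j - 1) < 0})"
    using u by (auto simp: absl_def)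
  fix k
  assume k: "k < length w"
  then have "u ! k = nat \<bar>w ! k\<bar>" "length u = length w" "k < n"
    using u Dn_length[OF w] by (auto simp: absl_def)
  then show "w ! k = sign_word u {j \<in> {1..n}. w ! (j - 1) < 0} ! k"
    using k by auto
qed

lemma bij_betw_sign_word:
  assumes u: "u \<in> perms n"
  shows "bij_betw (sign_word u) {N. N \<subseteq> {1..n} \<and> even (card N)} {w \<in> Dn n. absl w = u}"
proof (rule bij_betwI')
  fix N M
  assume "N \<in> {N. N \<subseteq> {1..n} \<and> even (card N)}" "M \<in> {N. N \<subseteq> {1..n} \<and> even (card N)}"
  moreover have "j \<in> N \<longleftrightarrow> j \<in> M" if "sign_word u N = sign_word u M" "j \<in> {1..n}" for j
  proof -
    have j: "j - 1 < n" "Suc (j - 1) = j"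
      using that(2) by auto
    have "sign_word u N ! (j - 1) = sign_word u M ! (j - 1)"
      using that(1) by simp
    then show ?thesis
      using j perms_nth_bounds[OF u j(1)] perms_length[OF u] by (auto split: if_splits)
  qed
  ultimately show "sign_word u N = sign_word u M \<longleftrightarrow> N = M"
    by blast
next
  fix N
  assume "N \<in> {N. N \<subseteq> {1..n} \<and> even (card N)}"
  then show "sign_word u N \<in> {w \<in> Dn n. absl w = u}"
    using sign_word_in_Dn[OF u] absl_sign_word by auto
next
  fix w
  assume w: "w \<in> {w \<in> Dn n. absl w = u}"
  define N where "N = {j \<in> {1..n}. w ! (j - 1) < 0}"
  have N: "N \<subseteq> {1..n}"
    by (auto simp: N_def)
  have w_eq: "w = sign_word u N"
    using w Dn_eq_sign_word by (auto simp: N_def)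
  have "even (length (filter (\<lambda>x. x < 0) w))"
    using w by (simp add: Dn_def)
  then have "even (card N)"
    using length_filter_neg_sign_word[OF u N] w_eq by simp
  then show "\<exists>N \<in> {N. N \<subseteq> {1..n} \<and> even (card N)}. w = sign_word u N"
    using N w_eq by blast
qed

lemma psi_eq_sum_sign_words:
  "u \<in> perms n \<Longrightarrow> psi n f u = (\<Sum>N | N \<subseteq> {1..n} \<and> even (card N). f (sign_word u N))"
  unfolding psi_def by (rule sum.reindex_bij_betw[symmetric, OF bij_betw_sign_word])

lemma psi_notin_perms:
  assumes "u \<notin> perms n"
  shows "psi n f u = 0"
proof -
  have "{w \<in> Dn n. absl w = u} = {}"
    using assms absl_in_perms by blast
  then show ?thesis
    unfolding psi_def by (simp only: sum.empty)
qed

lemma psi_eqI: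
  assumes "\<And>u. u \<in> perms n \<Longrightarrow> psi n f u = g u" "\<And>u. u \<notin> perms n \<Longrightarrow> g u = 0"
  shows "psi n f = g"
proof
  fix u
  show "psi n f u = g u"
    by (cases "u \<in> perms n") (simp_all add: assms psi_notin_perms)
qed

section \<open>Descent sets of signed words\<close>

lemma Nd_in_dlabels [simp]: "Nd i \<in> dlabels n \<longleftrightarrow> i \<in> {1..n - 1}"
  by (auto simp: dlabels_def)

lemma OneP_in_dlabels [simp]: "OneP \<in> dlabels n"
  by (simp add: dlabels_def)

lemma finite_dlabels [simp]: "finite (dlabels n)"
  by (simp add: dlabels_def)

lemma card_dlabels:
  assumes "1 \<le> n"
  shows "card (dlabels n) = n"
proof -
  have "OneP \<notin> Nd ` {1..n - 1}" "inj_on Nd {1..n - 1}"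
    by (auto simp: inj_on_def)
  then show ?thesis
    using assms by (simp add: dlabels_def card_image)
qed

lemma DesA_subset: "DesA n u \<subseteq> {1..n - 1}"
  by (auto simp: DesA_def)

(* Whether i is a descent of a signed word w over u, with D = Des(u), depends only on the sign
   at position sign_pos D i: on that of w_i if u_i > u_(i+1), and on that of w_(i+1) otherwise. *)
definition sign_pos :: "nat set \<Rightarrow> nat \<Rightarrow> nat" where
  "sign_pos D i = (if i \<in> D then i else Suc i)"

(* 1' is a descent of w iff 1 is a descent of the word with w_1 negated, so it is decided by the
   same position as 1, with the opposite dependence when 1 is a descent of u. *)
fun label_index :: "dlabel \<Rightarrow> nat" where
  "label_index OneP = 1"
| "label_index (Nd i) = i"

fun label_flip :: "nat set \<Rightarrow> dlabel \<Rightarrow> bool" where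
  "label_flip D OneP = False"
| "label_flip D (Nd i) = (i \<in> D)"

abbreviation label_pos :: "nat set \<Rightarrow> dlabel \<Rightarrow> nat" where
  "label_pos D l \<equiv> sign_pos D (label_index l)"

definition signed_des :: "nat \<Rightarrow> nat set \<Rightarrow> nat set \<Rightarrow> dlabel set" where
  "signed_des n D N = {l \<in> dlabels n. (label_pos D l \<in> N) \<noteq> label_flip D l}"

lemma label_index_dlabels: "2 \<le> n \<Longrightarrow> label_index ` dlabels n = {1..n - 1}"
  by (simp add: dlabels_def image_image insert_absorb)

lemma label_index_ge1: "l \<in> dlabels n \<Longrightarrow> 1 \<le> label_index l"
  by (auto simp: dlabels_def)

lemma sign_pos_eq_iff:
  "sign_pos D i = sign_pos D j \<longleftrightarrow>
    i = j \<or> (j = Suc i \<and> i \<notin> D \<and> j \<in> D) \<or> (i = Suc j \<and> j \<notin> D \<and> i \<in> D)"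
  by (auto simp: sign_pos_def)

lemma label_flip_collision:
  assumes "label_pos D l = label_pos D l'" "label_index l < label_index l'"
    and "1 \<le> label_index l"
  shows "\<not> label_flip D l \<and> label_flip D l'"
  using assms by (cases l; cases l') (auto simp: sign_pos_eq_iff)

lemma signed_less_iff:
  fixes x y :: int
  assumes "0 < x" "0 < y" "x \<noteq> y"
  shows "(if t then - y else y) < (if s then - x else x) \<longleftrightarrow> (if y < x then \<not> s else t)"
  using assms by auto

lemma sign_word_descent_iff:
  assumes u: "u \<in> perms n" and i: "i \<in> {1..n - 1}"
  shows "sign_word u N ! i < sign_word u N ! (i - 1) \<longleftrightarrow>
    (sign_pos (DesA n u) i \<in> N) \<noteq> (i \<in> DesA n u)"
proof -
  have "i < n" "i - 1 < n" "Suc (i - 1) = i" "i - 1 \<noteq> i"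
    using i by auto
  moreover have "u ! (i - 1) \<noteq> u ! i"
    using perms_nth_eq_iff[OF u, of "i - 1" i] calculation by simp
  moreover have "i \<in> DesA n u \<longleftrightarrow> u ! i < u ! (i - 1)"
    using i by (simp add: DesA_def)
  ultimately show ?thesis
    using perms_nth_bounds[OF u] perms_length[OF u]
    by (simp add: sign_pos_def signed_less_iff)
qed

lemma sign_word_OneP_descent_iff:
  assumes u: "u \<in> perms n" and n: "2 \<le> n"
  shows "sign_word u N ! 1 < - (sign_word u N ! 0) \<longleftrightarrow> sign_pos (DesA n u) 1 \<in> N"
proof -
  have "u ! 0 \<noteq> u ! 1"
    using perms_nth_eq_iff[OF u] n by simp
  moreover have "1 \<in> DesA n u \<longleftrightarrow> u ! 1 < u ! 0"
    using n by (auto simp: DesA_def)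
  moreover have "- (if s then - x else x) = (if \<not> s then - x else x)" for s and x :: int
    by simp
  ultimately show ?thesis
    using perms_nth_bounds[OF u] perms_length[OF u] n
    by (simp add: sign_pos_def signed_less_iff numeral_2_eq_2)
qed

lemma DesD_sign_word:
  assumes u: "u \<in> perms n" and n: "2 \<le> n"
  shows "DesD n (sign_word u N) = signed_des n (DesA n u) N"
proof (rule set_eqI)
  fix l
  show "l \<in> DesD n (sign_word u N) \<longleftrightarrow> l \<in> signed_des n (DesA n u) N"
  proof (cases l)
    case OneP
    then show ?thesis
      using sign_word_OneP_descent_iff[OF u n]
      by (simp add: DesD_def signed_des_def dlabels_def)
  next
    case (Nd i)
    then show ?thesis
      using sign_word_descent_iff[OF u, of i]
      by (auto simp: DesD_def signed_des_def dlabels_def)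
  qed
qed

lemma signed_des_eq_iff:
  assumes "S \<subseteq> dlabels n"
  shows "signed_des n D N = S \<longleftrightarrow>
    (\<forall>l\<in>dlabels n. (label_pos D l \<in> N) = (label_flip D l \<noteq> (l \<in> S)))"
  using assms by (auto simp: signed_des_def)

lemma signed_des_subset_iff:
  "signed_des n D N \<subseteq> S \<longleftrightarrow>
    (\<forall>l\<in>dlabels n - S. (label_pos D l \<in> N) = label_flip D l)"
  by (auto simp: signed_des_def)

lemma psi_Y_card:
  assumes u: "u \<in> perms n" and n: "2 \<le> n"
  shows "psi n (Y n S) u =
    of_nat (card {N. N \<subseteq> {1..n} \<and> even (card N) \<and> signed_des n (DesA n u) N = S})"
proof -
  have "psi n (Y n S) u =
      (\<Sum>N | N \<subseteq> {1..n} \<and> even (card N). if signed_des n (DesA n u) N = S then 1 else 0)"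
    using sign_word_in_Dn[OF u] DesD_sign_word[OF u n]
    by (simp add: psi_eq_sum_sign_words[OF u] Y_def)
  then show ?thesis
    by (simp add: sum.If_cases Int_def conj_assoc)
qed

lemma X_eq_indicator:
  assumes "finite S"
  shows "X n S w = (if w \<in> Dn n \<and> DesD n w \<subseteq> S then 1 else 0)"
proof -
  have "X n S w = (\<Sum>I\<in>Pow S. if DesD n w = I then (if w \<in> Dn n then 1 else 0) else 0)"
    unfolding X_def Y_def by (rule sum.cong) auto
  also have "\<dots> = (if DesD n w \<in> Pow S then (if w \<in> Dn n then 1 else 0) else 0)"
    using assms by (simp add: sum.delta')
  finally show ?thesis
    by auto
qed

lemma psi_X_card:
  assumes u: "u \<in> perms n" and n: "2 \<le> n" and S: "finite S"
  shows "psi n (X n S) u =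
    of_nat (card {N. N \<subseteq> {1..n} \<and> even (card N) \<and> signed_des n (DesA n u) N \<subseteq> S})"
proof -
  have "psi n (X n S) u =
      (\<Sum>N | N \<subseteq> {1..n} \<and> even (card N). if signed_des n (DesA n u) N \<subseteq> S then 1 else 0)"
    using sign_word_in_Dn[OF u] DesD_sign_word[OF u n]
    by (simp add: psi_eq_sum_sign_words[OF u] X_eq_indicator[OF S])
  then show ?thesis
    by (simp add: sum.If_cases Int_def conj_assoc)
qed

section \<open>Counting even sets with prescribed members\<close>

lemma card_supersets:
  assumes "finite S" "U \<subseteq> S"
  shows "card {T. T \<subseteq> S \<and> U \<subseteq> T} = 2 ^ (card S - card U)"
proof -
  have "bij_betw (\<lambda>T. T - U) {T. T \<subseteq> S \<and> U \<subseteq> T} (Pow (S - U))"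
    by (rule bij_betw_byWitness[where f' = "\<lambda>M. M \<union> U"]) (use assms(2) in blast)+
  then have "card {T. T \<subseteq> S \<and> U \<subseteq> T} = card (Pow (S - U))"
    by (rule bij_betw_same_card)
  also have "\<dots> = 2 ^ (card S - card U)"
    using assms finite_subset[OF assms(2,1)] by (simp add: card_Pow card_Diff_subset)
  finally show ?thesis .
qed

lemma card_even_supersets:
  assumes "finite S" "U \<subset> S"
  shows "card {T. T \<subseteq> S \<and> U \<subseteq> T \<and> even (card T)} = 2 ^ (card S - card U - 1)"
proof -
  let ?E = "{T. T \<subseteq> S \<and> U \<subseteq> T \<and> even (card T)}"
  let ?O = "{T. T \<subseteq> S \<and> U \<subseteq> T \<and> odd (card T)}"
  have "card ?E = card ?O"
    using card_subsupersets_even_odd[OF assms] .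
  moreover have "card ?E + card ?O = 2 ^ (card S - card U)"
  proof -
    have "finite ?E" "finite ?O"
      using assms(1) by (auto intro: finite_subset[of _ "Pow S"])
    then have "card ?E + card ?O = card (?E \<union> ?O)"
      by (intro card_Un_disjoint[symmetric]) auto
    also have "?E \<union> ?O = {T. T \<subseteq> S \<and> U \<subseteq> T}"
      by blast
    finally show ?thesis
      using card_supersets[OF assms(1)] assms(2) by auto
  qed
  moreover have "card U < card S"
    using assms by (rule psubset_card_mono)
  ultimately show ?thesis
    by (cases "card S - card U") auto
qed

lemma prescribed_members_iff:
  "N \<subseteq> I \<and> (\<forall>x\<in>L. (f x \<in> N) = v x) \<longleftrightarrow>
    N \<subseteq> I - f ` {x \<in> L. \<not> v x} \<and> f ` {x \<in> L. v x} \<subseteq> N"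
proof
  assume h: "N \<subseteq> I \<and> (\<forall>x\<in>L. (f x \<in> N) = v x)"
  then have "N \<inter> f ` {x \<in> L. \<not> v x} = {}" "f ` {x \<in> L. v x} \<subseteq> N"
    by blast+
  with h show "N \<subseteq> I - f ` {x \<in> L. \<not> v x} \<and> f ` {x \<in> L. v x} \<subseteq> N"
    by blast
next
  assume h: "N \<subseteq> I - f ` {x \<in> L. \<not> v x} \<and> f ` {x \<in> L. v x} \<subseteq> N"
  then have "(f x \<in> N) = v x" if "x \<in> L" for x
    using that by blast
  with h show "N \<subseteq> I \<and> (\<forall>x\<in>L. (f x \<in> N) = v x)"
    by blast
qed

lemma card_even_subsets_prescribed_consistent:
  assumes I: "finite I" "f ` L \<subseteq> I" "f ` L \<noteq> I"
    and consistent: "\<forall>x\<in>L. \<forall>y\<in>L. f x = f y \<longrightarrow> v x = v y"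
  shows "card {N. N \<subseteq> I \<and> (\<forall>x\<in>L. (f x \<in> N) = v x) \<and> even (card N)} = 2 ^ (card I - card (f ` L) - 1)"
proof -
  let ?U = "f ` {x \<in> L. v x}" and ?F = "f ` {x \<in> L. \<not> v x}"
  have disj: "?U \<inter> ?F = {}"
    using consistent by auto
  have "{N. N \<subseteq> I \<and> (\<forall>x\<in>L. (f x \<in> N) = v x) \<and> even (card N)} =
      {T. T \<subseteq> I - ?F \<and> ?U \<subseteq> T \<and> even (card T)}"
    using prescribed_members_iff[of _ I L f v] by blast
  moreover have "card \<dots> = 2 ^ (card (I - ?F) - card ?U - 1)"
  proof (rule card_even_supersets)
    show "finite (I - ?F)"
      using I(1) by simp
    obtain j where "j \<in> I" "j \<notin> f ` L"
      using I(2,3) by blast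
    then show "?U \<subset> I - ?F"
      using I(2) disj by blast
  qed
  moreover have "card (I - ?F) - card ?U = card I - card (f ` L)"
  proof -
    have "finite (f ` L)"
      using I(1,2) by (rule finite_subset[rotated])
    then have fin: "finite ?U" "finite ?F"
      by (auto elim: finite_subset[rotated])
    have "f ` L = ?U \<union> ?F"
      by blast
    then have "card (f ` L) = card ?U + card ?F"
      using fin disj by (simp add: card_Un_disjoint)
    moreover have "card (I - ?F) = card I - card ?F"
      using fin I(2) by (intro card_Diff_subset) auto
    ultimately show ?thesis
      by simp
  qed
  ultimately show ?thesis
    by (simp only:)
qed

lemma card_even_subsets_prescribed:
  assumes "finite I" "f ` L \<subseteq> I" "f ` L \<noteq> I"
  shows "card {N. N \<subseteq> I \<and> (\<forall>x\<in>L. (f x \<in> N) = v x) \<and> even (card N)} =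
    (if \<forall>x\<in>L. \<forall>y\<in>L. f x = f y \<longrightarrow> v x = v y then 2 ^ (card I - card (f ` L) - 1) else 0)"
proof (cases "\<forall>x\<in>L. \<forall>y\<in>L. f x = f y \<longrightarrow> v x = v y")
  case True
  then show ?thesis
    using card_even_subsets_prescribed_consistent[OF assms True] by (simp only: if_P)
next
  case False
  then obtain x y where "x \<in> L" "y \<in> L" "f x = f y" "v x \<noteq> v y"
    by blast
  then have "\<not> (\<forall>x\<in>L. (f x \<in> N) = v x)" for N
    by metis
  then have "{N. N \<subseteq> I \<and> (\<forall>x\<in>L. (f x \<in> N) = v x) \<and> even (card N)} = {}"
    by blast
  then show ?thesis
    using False by (simp only: card.empty if_False)
qed

lemma Peak_subset: "Peak n u \<subseteq> {1..n - 1}"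
  by (auto simp: Peak_def)

lemma Peak_conv_DesA:
  assumes u: "u \<in> perms n"
  shows "Peak n u = {p \<in> DesA n u. p = 1 \<or> p - 1 \<notin> DesA n u}"
proof -
  have "uval u (p - 1) < uval u p \<longleftrightarrow> p = 1 \<or> p - 1 \<notin> DesA n u" if p: "p \<in> {1..n - 1}" for p
  proof (cases "p = 1")
    case True
    have "0 < n"
      using p by auto
    then show ?thesis
      using True perms_nth_bounds[OF u, of 0] by (simp add: uval_def)
  next
    case False
    then have "p - 1 - 1 < n" "p - 1 < n" "p - 1 - 1 \<noteq> p - 1" "p - 1 \<in> {1..n - 1}"
      using p by auto
    moreover have "u ! (p - 1 - 1) \<noteq> u ! (p - 1)"
      using perms_nth_eq_iff[OF u, of "p - 1 - 1" "p - 1"] calculation by simp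
    ultimately show ?thesis
      using False by (auto simp: uval_def DesA_def)
  qed
  moreover have "uval u (p + 1) < uval u p \<longleftrightarrow> p \<in> DesA n u" if "p \<in> {1..n - 1}" for p
    using that by (simp add: uval_def DesA_def)
  ultimately show ?thesis
    by (auto simp: Peak_def DesA_def)
qed

lemma Peak_in_Fn: "u \<in> perms n \<Longrightarrow> Peak n u \<in> Fn n"
  by (auto simp: Peak_conv_DesA Fn_def DesA_def)

lemma card_sign_pos_image:
  assumes D: "D \<subseteq> {1..m}"
  shows "card (sign_pos D ` {1..m}) = m - card {p \<in> D. p \<noteq> 1 \<and> p - 1 \<notin> D}"
proof -
  let ?C = "{p \<in> D. p \<noteq> 1 \<and> p - 1 \<notin> D}"
  have "sign_pos D p \<in> sign_pos D ` ({1..m} - ?C)" if "p \<in> ?C" for p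
  proof -
    have "p \<in> {1..m}"
      using that D by blast
    then have "sign_pos D p = sign_pos D (p - 1)" "p - 1 \<in> {1..m} - ?C"
      using that by (auto simp: sign_pos_def)
    then show ?thesis
      by blast
  qed
  then have "sign_pos D ` {1..m} = sign_pos D ` ({1..m} - ?C)"
    by blast
  moreover have "inj_on (sign_pos D) ({1..m} - ?C)"
    by (auto simp: inj_on_def sign_pos_eq_iff)
  moreover have "?C \<subseteq> {1..m}"
    using D by blast
  ultimately show ?thesis
    by (simp add: card_image card_Diff_subset finite_subset[OF _ finite_atLeastAtMost])
qed

lemma sum_P_Peak:
  assumes u: "u \<in> perms n"
  shows "(\<Sum>F\<in>{F. F \<in> Fn n \<and> Q F}. c F * P n F u) = (if Q (Peak n u) then c (Peak n u) else 0)"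
proof -
  have "finite {F. F \<in> Fn n \<and> Q F}"
    by (rule finite_subset[of _ "Pow {1..n - 1}"]) (auto simp: Fn_def)
  moreover have "(\<Sum>F\<in>{F. F \<in> Fn n \<and> Q F}. c F * P n F u) =
      (\<Sum>F\<in>{F. F \<in> Fn n \<and> Q F}. if F = Peak n u then c F else 0)"
    using u by (intro sum.cong) (auto simp: P_def)
  ultimately show ?thesis
    using Peak_in_Fn[OF u] by (simp add: sum.delta)
qed

lemma sum_P_insert1_Peak:
  assumes u: "u \<in> perms n" and A: "1 \<notin> A"
  shows "(\<Sum>F\<in>{F. insert 1 F \<in> Fn n \<and> F \<subseteq> A}. c F * P n (insert 1 F) u) =
    (if 1 \<in> Peak n u \<and> Peak n u - {1} \<subseteq> A then c (Peak n u - {1}) else 0)"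
proof -
  let ?FF = "{F. insert 1 F \<in> Fn n \<and> F \<subseteq> A}"
  have fin: "finite ?FF"
    by (rule finite_subset[of _ "Pow {1..n - 1}"]) (auto simp: Fn_def)
  have "insert 1 F = Peak n u \<longleftrightarrow> 1 \<in> Peak n u \<and> F = Peak n u - {1}" if "F \<in> ?FF" for F
    using that A by auto
  then have "(\<Sum>F\<in>?FF. c F * P n (insert 1 F) u) =
      (\<Sum>F\<in>?FF. if F = Peak n u - {1} then (if 1 \<in> Peak n u then c F else 0) else 0)"
    using u by (intro sum.cong) (auto simp: P_def)
  also have "\<dots> = (if Peak n u - {1} \<in> ?FF then (if 1 \<in> Peak n u then c (Peak n u - {1}) else 0) else 0)"
    using fin by (rule sum.delta)
  also have "\<dots> = (if 1 \<in> Peak n u \<and> Peak n u - {1} \<subseteq> A then c (Peak n u - {1}) else 0)"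
    using Peak_in_Fn[OF u] by (auto simp: insert_absorb)
  finally show ?thesis .
qed

lemma sum_P_notin_perms: "u \<notin> perms n \<Longrightarrow> (\<Sum>F\<in>FF. c F * P n (g F) u) = 0"
  by (simp add: P_def)

section \<open>The images of Y and X under psi\<close>

lemma label_pos_image_subset:
  assumes D: "D \<subseteq> {1..n - 1}" and n: "2 \<le> n" and L: "L \<subseteq> dlabels n"
  shows "label_pos D ` L \<subseteq> {1..n}"
proof
  fix p
  assume "p \<in> label_pos D ` L"
  then obtain l where "l \<in> dlabels n" "p = sign_pos D (label_index l)"
    using L by blast
  moreover have "label_index l \<in> {1..n - 1}" if "l \<in> dlabels n" for l
    using that label_index_dlabels[OF n] by blast
  ultimately show "p \<in> {1..n}"
    by (force simp: sign_pos_def)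
qed

lemma card_label_pos_dlabels:
  assumes D: "D \<subseteq> {1..n - 1}" and n: "2 \<le> n"
  shows "card (label_pos D ` dlabels n) = n - 1 - card {p \<in> D. p \<noteq> 1 \<and> p - 1 \<notin> D}"
proof -
  have "label_pos D ` dlabels n = sign_pos D ` {1..n - 1}"
    using label_index_dlabels[OF n] image_image[of "sign_pos D" label_index "dlabels n"] by simp
  then show ?thesis
    using card_sign_pos_image[OF D] by simp
qed

lemma Y_consistent_iff:
  assumes D: "D \<subseteq> {1..n - 1}" and n: "2 \<le> n"
  shows "(\<forall>l\<in>dlabels n. \<forall>l'\<in>dlabels n. label_pos D l = label_pos D l' \<longrightarrow>
      (label_flip D l \<noteq> (l \<in> S)) = (label_flip D l' \<noteq> (l' \<in> S))) \<longleftrightarrow>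
    (1 \<in> D \<longleftrightarrow> (OneP \<in> S \<longleftrightarrow> Nd 1 \<notin> S)) \<and>
    (\<forall>p\<in>D. p \<noteq> 1 \<longrightarrow> p - 1 \<notin> D \<longrightarrow> (Nd (p - 1) \<in> S \<longleftrightarrow> Nd p \<notin> S))"
  (is "?consistent \<longleftrightarrow> ?first \<and> ?peaks")
proof
  assume c: ?consistent
  have "OneP \<in> dlabels n" "Nd 1 \<in> dlabels n"
    using n by simp_all
  then have ?first
    using c by fastforce
  moreover have "Nd (p - 1) \<in> S \<longleftrightarrow> Nd p \<notin> S" if "p \<in> D" "p \<noteq> 1" "p - 1 \<notin> D" for p
  proof -
    have "p \<in> {1..n - 1}"
      using that D by blast
    then have "p - 1 \<in> {1..n - 1}"
      using that by auto
    then have mem: "Nd (p - 1) \<in> dlabels n" "Nd p \<in> dlabels n"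
      using \<open>p \<in> {1..n - 1}\<close> by simp_all
    have "sign_pos D (p - 1) = sign_pos D p"
      using that \<open>p \<in> {1..n - 1}\<close> by (auto simp: sign_pos_def)
    then show ?thesis
      using c[rule_format, OF mem] that by simp
  qed
  ultimately show "?first \<and> ?peaks"
    by blast
next
  assume h: "?first \<and> ?peaks"
  define v where "v i = ((i \<in> D) \<noteq> (Nd i \<in> S))" for i
  have flip: "(label_flip D l \<noteq> (l \<in> S)) = v (label_index l)" for l
    using h by (cases l) (auto simp: v_def)
  have v_eq: "v i = v j" if "1 \<le> i" "1 \<le> j" "sign_pos D i = sign_pos D j" for i j
    using that h by (auto simp: sign_pos_eq_iff v_def)
  show ?consistent
    unfolding flip using v_eq label_index_ge1 by blast
qed

lemma psi_Y_on_perms: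
  assumes u: "u \<in> perms n" and n: "2 \<le> n" and S: "S \<subseteq> dlabels n"
  shows "psi n (Y n S) u =
    (if (1 \<in> Peak n u \<longleftrightarrow> (OneP \<in> S \<longleftrightarrow> Nd 1 \<notin> S)) \<and>
        (\<forall>p\<in>Peak n u - {1}. Nd (p - 1) \<in> S \<longleftrightarrow> Nd p \<notin> S)
     then 2 ^ card (Peak n u - {1}) else 0)"
proof -
  let ?D = "DesA n u"
  have D: "?D \<subseteq> {1..n - 1}"
    by (rule DesA_subset)
  have peaks: "Peak n u - {1} = {p \<in> ?D. p \<noteq> 1 \<and> p - 1 \<notin> ?D}" "1 \<in> Peak n u \<longleftrightarrow> 1 \<in> ?D"
    by (auto simp: Peak_conv_DesA[OF u])
  have card: "card (label_pos ?D ` dlabels n) = n - 1 - card (Peak n u - {1})"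
    unfolding peaks by (rule card_label_pos_dlabels[OF D n])
  have "Peak n u - {1} \<subseteq> {1..n - 1}"
    using peaks(1) D by blast
  then have "card (Peak n u - {1}) \<le> card {1..n - 1}"
    by (rule card_mono[OF finite_atLeastAtMost])
  then have exponent: "card {1..n} - card (label_pos ?D ` dlabels n) - 1 = card (Peak n u - {1})"
    unfolding card using n by simp
  have sub: "label_pos ?D ` dlabels n \<subseteq> {1..n}"
    by (rule label_pos_image_subset[OF D n subset_refl])
  have neq: "label_pos ?D ` dlabels n \<noteq> {1..n}"
  proof
    assume "label_pos ?D ` dlabels n = {1..n}"
    then have "card (label_pos ?D ` dlabels n) = n"
      by simp
    then show False
      using card n by linarith
  qed
  have count: "card {N. N \<subseteq> {1..n} \<and>
      (\<forall>l\<in>dlabels n. (label_pos ?D l \<in> N) = (label_flip ?D l \<noteq> (l \<in> S))) \<and> even (card N)} =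
    (if (1 \<in> ?D \<longleftrightarrow> (OneP \<in> S \<longleftrightarrow> Nd 1 \<notin> S)) \<and>
        (\<forall>p\<in>?D. p \<noteq> 1 \<longrightarrow> p - 1 \<notin> ?D \<longrightarrow> (Nd (p - 1) \<in> S \<longleftrightarrow> Nd p \<notin> S))
     then 2 ^ card (Peak n u - {1}) else 0)"
    unfolding card_even_subsets_prescribed[OF finite_atLeastAtMost sub neq] Y_consistent_iff[OF D n] exponent ..
  have solutions: "{N. N \<subseteq> {1..n} \<and> even (card N) \<and> signed_des n ?D N = S} = {N. N \<subseteq> {1..n} \<and>
      (\<forall>l\<in>dlabels n. (label_pos ?D l \<in> N) = (label_flip ?D l \<noteq> (l \<in> S))) \<and> even (card N)}"
    using signed_des_eq_iff[OF S] by blast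
  have "(\<forall>p\<in>?D. p \<noteq> 1 \<longrightarrow> p - 1 \<notin> ?D \<longrightarrow> (Nd (p - 1) \<in> S \<longleftrightarrow> Nd p \<notin> S)) \<longleftrightarrow>
      (\<forall>p\<in>Peak n u - {1}. Nd (p - 1) \<in> S \<longleftrightarrow> Nd p \<notin> S)"
    unfolding peaks by blast
  then have "card {N. N \<subseteq> {1..n} \<and> even (card N) \<and> signed_des n ?D N = S} =
    (if (1 \<in> Peak n u \<longleftrightarrow> (OneP \<in> S \<longleftrightarrow> Nd 1 \<notin> S)) \<and>
        (\<forall>p\<in>Peak n u - {1}. Nd (p - 1) \<in> S \<longleftrightarrow> Nd p \<notin> S)
     then 2 ^ card (Peak n u - {1}) else 0)"
    unfolding solutions count peaks(2) by (simp only:)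
  then show ?thesis
    unfolding psi_Y_card[OF u n] by (simp only: if_distrib[of of_nat] of_nat_power of_nat_numeral of_nat_0)
qed

(* A position carrying labels with different flips is a peak p of u; besides p it carries p - 1
   if p > 1 and 1' if p \<le> 2. *)
definition peak_covered :: "dlabel set \<Rightarrow> nat \<Rightarrow> bool" where
  "peak_covered S p \<longleftrightarrow>
    Nd p \<in> S \<or> (p = 1 \<and> OneP \<in> S) \<or> (p = 2 \<and> OneP \<in> S \<and> Nd 1 \<in> S) \<or> (3 \<le> p \<and> Nd (p - 1) \<in> S)"

lemma X_consistent_peak_covered:
  assumes D: "D \<subseteq> {1..n - 1}" and n: "2 \<le> n"
    and consistent: "\<forall>l\<in>dlabels n - S. \<forall>l'\<in>dlabels n - S.
      label_pos D l = label_pos D l' \<longrightarrow> label_flip D l = label_flip D l'"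
    and p: "p \<in> D" "p = 1 \<or> p - 1 \<notin> D"
  shows "peak_covered S p"
proof (rule ccontr)
  assume uncovered: "\<not> peak_covered S p"
  have p_range: "p \<in> {1..n - 1}"
    using p D by blast
  then have Nd_p: "Nd p \<in> dlabels n - S"
    using uncovered by (simp add: peak_covered_def)
  have flip: "label_flip D l" if "l \<in> dlabels n - S" "label_pos D l = p" for l
    using consistent[rule_format, OF that(1) Nd_p] that(2) p(1) by (simp add: sign_pos_def)
  have "p = 1 \<or> p = 2 \<or> 3 \<le> p"
    using p_range by auto
  then consider "p = 1" | "p = 2" | "3 \<le> p"
    by blast
  then show False
  proof cases
    case 1
    then show False
      using flip[of OneP] uncovered p by (simp add: peak_covered_def sign_pos_def)
  next
    case 2
    then have "1 \<notin> D" "Nd 1 \<in> dlabels n"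
      using p n by simp_all
    then show False
      using flip[of OneP] flip[of "Nd 1"] uncovered 2 by (auto simp: peak_covered_def sign_pos_def)
  next
    case 3
    then have "Nd (p - 1) \<in> dlabels n"
      using p_range by auto
    then show False
      using flip[of "Nd (p - 1)"] uncovered p 3 by (simp add: peak_covered_def sign_pos_def)
  qed
qed

lemma peak_covered_X_consistent:
  assumes covered: "\<And>p. p \<in> D \<Longrightarrow> p = 1 \<or> p - 1 \<notin> D \<Longrightarrow> peak_covered S p"
  shows "\<forall>l\<in>dlabels n - S. \<forall>l'\<in>dlabels n - S.
    label_pos D l = label_pos D l' \<longrightarrow> label_flip D l = label_flip D l'"
proof -
  have flip: "label_flip D l"
    if l: "l \<in> dlabels n - S" "l' \<in> dlabels n - S" "label_flip D l'"
      and pos: "label_pos D l = label_pos D l'" for l l'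
  proof (rule ccontr)
    assume no_flip: "\<not> label_flip D l"
    from l(3) obtain p where p: "l' = Nd p" "p \<in> D"
      by (cases l') auto
    then have pos_p: "label_pos D l = p"
      using pos by (simp add: sign_pos_def)
    show False
    proof (cases l)
      case OneP
      then have "p = 1 \<and> 1 \<in> D \<or> p = 2 \<and> 1 \<notin> D"
        using pos_p by (auto simp: sign_pos_def numeral_2_eq_2 split: if_splits)
      then have "peak_covered S p"
        using covered p(2) by auto
      then show False
        using l(1,2) p(1) OneP \<open>p = 1 \<and> 1 \<in> D \<or> p = 2 \<and> 1 \<notin> D\<close> by (auto simp: peak_covered_def)
    next
      case (Nd i)
      then have "i \<notin> D" "p = Suc i" "1 \<le> i"
        using no_flip pos_p l(1) by (auto simp: sign_pos_def)
      then have "peak_covered S p"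
        using covered p(2) by auto
      then show False
        using l(1,2) p(1) Nd \<open>p = Suc i\<close> \<open>1 \<le> i\<close> by (auto simp: peak_covered_def)
    qed
  qed
  show ?thesis
  proof (intro ballI impI)
    fix l l'
    assume "l \<in> dlabels n - S" "l' \<in> dlabels n - S" and "label_pos D l = label_pos D l'"
    then show "label_flip D l = label_flip D l'"
      using flip[of l l'] flip[of l' l] by metis
  qed
qed

(* 1' and 1 always share a position, so dropping 1' in the presence of 1 loses no position. *)
definition drop_OneP :: "dlabel set \<Rightarrow> dlabel set" where
  "drop_OneP L = L - (if Nd 1 \<in> L then {OneP} else {})"

lemma label_pos_image_drop_OneP: "label_pos D ` drop_OneP L = label_pos D ` L"
proof (rule equalityI)
  show "label_pos D ` L \<subseteq> label_pos D ` drop_OneP L"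
  proof (rule image_subsetI)
    fix l
    assume l: "l \<in> L"
    show "label_pos D l \<in> label_pos D ` drop_OneP L"
    proof (cases "l = OneP \<and> Nd 1 \<in> L")
      case True
      then have "label_pos D l = label_pos D (Nd 1)" "Nd 1 \<in> drop_OneP L"
        by (auto simp: drop_OneP_def)
      then show ?thesis
        by blast
    qed (use l in \<open>auto simp: drop_OneP_def\<close>)
  qed
qed (auto simp: drop_OneP_def)

lemma inj_on_label_pos_drop_OneP:
  assumes L: "L \<subseteq> dlabels n"
    and consistent: "\<forall>l\<in>L. \<forall>l'\<in>L. label_pos D l = label_pos D l' \<longrightarrow> label_flip D l = label_flip D l'"
  shows "inj_on (label_pos D) (drop_OneP L)"
proof (rule inj_onI)
  fix l l'
  assume l: "l \<in> drop_OneP L" "l' \<in> drop_OneP L" and pos: "label_pos D l = label_pos D l'"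
  then have "label_flip D l = label_flip D l'"
    using consistent by (auto simp: drop_OneP_def)
  moreover have "1 \<le> label_index l" "1 \<le> label_index l'"
    using l L label_index_ge1 by (auto simp: drop_OneP_def)
  ultimately have "label_index l = label_index l'"
    using label_flip_collision[OF pos] label_flip_collision[OF pos[symmetric]]
    by (metis linorder_neqE_nat)
  then show "l = l'"
    using l by (cases l; cases l') (auto simp: drop_OneP_def split: if_splits)
qed

lemma card_drop_OneP_dlabels_Diff:
  assumes n: "2 \<le> n" and S: "S \<subseteq> dlabels n"
  shows "card (drop_OneP (dlabels n - S)) + (card S + (if OneP \<notin> S \<and> Nd 1 \<notin> S then 1 else 0)) = n"
    (is "?card + (card S + ?e) = n")
    and "card (drop_OneP (dlabels n - S)) < n"
proof -
  have finS: "finite S"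
    using S by (rule finite_subset) simp
  then have "card (dlabels n - S) = n - card S"
    using card_Diff_subset[OF _ S] card_dlabels n by simp
  moreover have "?card = card (dlabels n - S) - ?e"
    using n by (auto simp: drop_OneP_def card_Diff_singleton_if)
  moreover have "card S \<le> card (dlabels n - (if OneP \<notin> S then {OneP} else {}))"
    by (rule card_mono) (use S in auto)
  moreover have "card (dlabels n - (if OneP \<notin> S then {OneP} else {})) = n - (if OneP \<notin> S then 1 else 0)"
    using card_dlabels n by (simp add: card_Diff_singleton_if)
  ultimately show sum: "?card + (card S + ?e) = n"
    using n by (auto split: if_splits)
  have "S \<noteq> {}" if "?e = 0"
    using that by (auto split: if_splits)
  then have "1 \<le> card S + ?e"
    using finS by (cases "?e = 0") (auto simp: Suc_le_eq card_gt_0_iff)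
  then show "?card < n"
    using sum by linarith
qed

lemma psi_X_on_perms:
  assumes u: "u \<in> perms n" and n: "2 \<le> n" and S: "S \<subseteq> dlabels n"
  shows "psi n (X n S) u =
    (if \<forall>p\<in>Peak n u. peak_covered S p
     then 2 ^ (card S + (if OneP \<notin> S \<and> Nd 1 \<notin> S then 1 else 0) - 1) else 0)"
proof -
  let ?D = "DesA n u"
  let ?L = "dlabels n - S"
  let ?e = "if OneP \<notin> S \<and> Nd 1 \<notin> S then 1 else 0 :: nat"
  let ?consistent = "\<forall>l\<in>?L. \<forall>l'\<in>?L. label_pos ?D l = label_pos ?D l' \<longrightarrow> label_flip ?D l = label_flip ?D l'"
  have D: "?D \<subseteq> {1..n - 1}"
    by (rule DesA_subset)
  have finS: "finite S"
    using S by (rule finite_subset) simp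
  note card_L = card_drop_OneP_dlabels_Diff[OF n S]
  have sub: "label_pos ?D ` ?L \<subseteq> {1..n}"
    using label_pos_image_subset[OF D n] by blast
  have neq: "label_pos ?D ` ?L \<noteq> {1..n}"
  proof
    assume "label_pos ?D ` ?L = {1..n}"
    then have "n \<le> card (drop_OneP ?L)"
      using card_image_le[of "drop_OneP ?L" "label_pos ?D"] label_pos_image_drop_OneP[of ?D ?L]
      by (simp add: drop_OneP_def)
    then show False
      using card_L(2) by linarith
  qed
  have exponent: "card {1..n} - card (label_pos ?D ` ?L) - 1 = card S + ?e - 1" if ?consistent
  proof -
    have "card (label_pos ?D ` ?L) = card (drop_OneP ?L)"
      using card_image[OF inj_on_label_pos_drop_OneP[OF _ that]] label_pos_image_drop_OneP by auto
    then show ?thesis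
      using card_L(1) by simp
  qed
  have "card {N. N \<subseteq> {1..n} \<and> (\<forall>l\<in>?L. (label_pos ?D l \<in> N) = label_flip ?D l) \<and> even (card N)} =
    (if ?consistent then 2 ^ (card S + ?e - 1) else 0)"
  proof (cases ?consistent)
    case True
    show ?thesis
      unfolding card_even_subsets_prescribed[OF finite_atLeastAtMost sub neq] if_P[OF True] exponent[OF True] ..
  next
    case False
    show ?thesis
      unfolding card_even_subsets_prescribed[OF finite_atLeastAtMost sub neq] if_not_P[OF False] ..
  qed
  moreover have "{N. N \<subseteq> {1..n} \<and> even (card N) \<and> signed_des n ?D N \<subseteq> S} =
      {N. N \<subseteq> {1..n} \<and> (\<forall>l\<in>?L. (label_pos ?D l \<in> N) = label_flip ?D l) \<and> even (card N)}"
    using signed_des_subset_iff by blast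
  moreover have "?consistent \<longleftrightarrow> (\<forall>p\<in>Peak n u. peak_covered S p)"
    using X_consistent_peak_covered[OF D n] peak_covered_X_consistent[of ?D S n]
    unfolding Peak_conv_DesA[OF u] by blast
  ultimately show ?thesis
    unfolding psi_X_card[OF u n finS]
    by (simp only: if_distrib[of of_nat] of_nat_power of_nat_numeral of_nat_0)
qed

lemma psi_SigmaD_in_SigmaA:
  assumes n: "2 \<le> n" and f: "f \<in> SigmaD n"
  shows "psi n f \<in> SigmaA n"
proof -
  obtain c where f_eq: "f = (\<lambda>w. \<Sum>J\<in>Pow (dlabels n). c J * Y n J w)"
    using f unfolding SigmaD_def by blast
  define d where "d K = (\<Sum>J\<in>Pow (dlabels n).
    c J * of_nat (card {N. N \<subseteq> {1..n} \<and> even (card N) \<and> signed_des n K N = J}))" for K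
  have "psi n f u = (\<Sum>K\<in>Pow {1..n - 1}. d K * B n K u)" for u
  proof (cases "u \<in> perms n")
    case True
    have "psi n f u = (\<Sum>J\<in>Pow (dlabels n). c J * psi n (Y n J) u)"
      unfolding f_eq psi_def by (simp add: sum_distrib_left sum.swap[of _ _ "Pow (dlabels n)"])
    also have "\<dots> = d (DesA n u)"
      by (simp add: d_def psi_Y_card[OF True n])
    also have "\<dots> = (\<Sum>K\<in>Pow {1..n - 1}. if K = DesA n u then d K else 0)"
      using DesA_subset[of n u] by simp
    also have "\<dots> = (\<Sum>K\<in>Pow {1..n - 1}. d K * B n K u)"
      using True by (intro sum.cong) (auto simp: B_def)
    finally show ?thesis .
  next
    case False
    then show ?thesis
      by (simp add: psi_notin_perms B_def)
  qed
  then show ?thesis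
    unfolding SigmaA_def by blast
qed

lemma mem_shift1 [simp]: "p \<in> shift1 J \<longleftrightarrow> 0 < p \<and> p - 1 \<in> J"
  by (force simp: shift1_def image_iff)

lemma mem_symdiff [simp]: "x \<in> symdiff A C \<longleftrightarrow> (x \<in> A) \<noteq> (x \<in> C)"
  by (auto simp: symdiff_def)

lemma card_Nd_image [simp]: "card (Nd ` J) = card J"
  by (simp add: card_image inj_on_def)

lemma psi_Y_eq_sum_P:
  assumes n: "2 \<le> n" and S: "S \<subseteq> dlabels n" and one: "OneP \<in> S \<longleftrightarrow> Nd 1 \<in> S"
    and A: "1 \<notin> A" "\<And>p. 2 \<le> p \<Longrightarrow> p \<in> A \<longleftrightarrow> (Nd (p - 1) \<in> S \<longleftrightarrow> Nd p \<notin> S)"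
  shows "psi n (Y n S) = (\<lambda>u. \<Sum>F\<in>{F. F \<in> Fn n \<and> F \<subseteq> A}. 2 ^ card F * P n F u)"
proof (rule psi_eqI)
  fix u
  assume u: "u \<in> perms n"
  have "2 \<le> p" if "p \<in> Peak n u - {1}" for p
    using that Peak_subset[of n u] by force
  then have "(\<forall>p\<in>Peak n u - {1}. Nd (p - 1) \<in> S \<longleftrightarrow> Nd p \<notin> S) \<longleftrightarrow> (\<forall>p\<in>Peak n u - {1}. p \<in> A)"
    using A(2) by (intro ball_cong) simp_all
  also have "\<dots> \<longleftrightarrow> Peak n u - {1} \<subseteq> A"
    by blast
  finally have "(\<forall>p\<in>Peak n u - {1}. Nd (p - 1) \<in> S \<longleftrightarrow> Nd p \<notin> S) \<longleftrightarrow> Peak n u - {1} \<subseteq> A" .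
  moreover have "(1 \<in> Peak n u \<longleftrightarrow> (OneP \<in> S \<longleftrightarrow> Nd 1 \<notin> S)) \<longleftrightarrow> 1 \<notin> Peak n u"
    using one by auto
  moreover have "1 \<notin> Peak n u \<and> Peak n u - {1} \<subseteq> A \<longleftrightarrow> Peak n u \<subseteq> A"
    using A(1) by blast
  ultimately have "(1 \<in> Peak n u \<longleftrightarrow> (OneP \<in> S \<longleftrightarrow> Nd 1 \<notin> S)) \<and>
      (\<forall>p\<in>Peak n u - {1}. Nd (p - 1) \<in> S \<longleftrightarrow> Nd p \<notin> S) \<longleftrightarrow> Peak n u \<subseteq> A"
    by (simp only:)
  moreover have "Peak n u \<subseteq> A \<Longrightarrow> Peak n u - {1} = Peak n u"
    using A(1) by blast
  ultimately show "psi n (Y n S) u = (\<Sum>F\<in>{F. F \<in> Fn n \<and> F \<subseteq> A}. 2 ^ card F * P n F u)"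
    unfolding psi_Y_on_perms[OF u n S] sum_P_Peak[OF u] by simp
qed (rule sum_P_notin_perms)

lemma psi_Y_eq_sum_P_insert1:
  assumes n: "2 \<le> n" and S: "S \<subseteq> dlabels n" and one: "OneP \<in> S \<longleftrightarrow> Nd 1 \<notin> S"
    and A: "1 \<notin> A" "\<And>p. 3 \<le> p \<Longrightarrow> p \<in> A \<longleftrightarrow> (Nd (p - 1) \<in> S \<longleftrightarrow> Nd p \<notin> S)"
  shows "psi n (Y n S) = (\<lambda>u. \<Sum>F\<in>{F. insert 1 F \<in> Fn n \<and> F \<subseteq> A}. 2 ^ card F * P n (insert 1 F) u)"
proof (rule psi_eqI)
  fix u
  assume u: "u \<in> perms n"
  have "3 \<le> p" if "p \<in> Peak n u" "p \<noteq> 1" "1 \<in> Peak n u" for p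
  proof -
    have "\<forall>i\<in>Peak n u. i + 1 \<notin> Peak n u"
      using Peak_in_Fn[OF u] by (simp add: Fn_def)
    then have "1 + 1 \<notin> Peak n u"
      using that(3) by blast
    then have "2 \<notin> Peak n u"
      unfolding one_add_one .
    moreover have "1 \<le> p"
      using Peak_subset[of n u] that(1) by force
    ultimately show ?thesis
      using that(1,2) by (cases "p = 2") auto
  qed
  then have "1 \<in> Peak n u \<Longrightarrow>
      (\<forall>p\<in>Peak n u - {1}. Nd (p - 1) \<in> S \<longleftrightarrow> Nd p \<notin> S) \<longleftrightarrow> (\<forall>p\<in>Peak n u - {1}. p \<in> A)"
    using A(2) by (intro ball_cong) simp_all
  then have "1 \<in> Peak n u \<Longrightarrow>
      (\<forall>p\<in>Peak n u - {1}. Nd (p - 1) \<in> S \<longleftrightarrow> Nd p \<notin> S) \<longleftrightarrow> Peak n u - {1} \<subseteq> A"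
    by blast
  moreover have "(1 \<in> Peak n u \<longleftrightarrow> (OneP \<in> S \<longleftrightarrow> Nd 1 \<notin> S)) \<longleftrightarrow> 1 \<in> Peak n u"
    using one by auto
  ultimately have "(1 \<in> Peak n u \<longleftrightarrow> (OneP \<in> S \<longleftrightarrow> Nd 1 \<notin> S)) \<and>
      (\<forall>p\<in>Peak n u - {1}. Nd (p - 1) \<in> S \<longleftrightarrow> Nd p \<notin> S) \<longleftrightarrow> 1 \<in> Peak n u \<and> Peak n u - {1} \<subseteq> A"
    by blast
  then show "psi n (Y n S) u =
      (\<Sum>F\<in>{F. insert 1 F \<in> Fn n \<and> F \<subseteq> A}. 2 ^ card F * P n (insert 1 F) u)"
    unfolding psi_Y_on_perms[OF u n S] sum_P_insert1_Peak[OF u A(1)] by simp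
qed (rule sum_P_notin_perms)

lemma psi_X_eq_sum_P:
  assumes n: "2 \<le> n" and S: "S \<subseteq> dlabels n"
    and T: "\<And>p. 1 \<le> p \<Longrightarrow> p \<in> T \<longleftrightarrow> peak_covered S p"
    and k: "k = card S + (if OneP \<notin> S \<and> Nd 1 \<notin> S then 1 else 0) - 1"
  shows "psi n (X n S) = (\<lambda>u. 2 ^ k * (\<Sum>F\<in>{F. F \<in> Fn n \<and> F \<subseteq> T}. P n F u))"
proof (rule psi_eqI)
  fix u
  assume u: "u \<in> perms n"
  have "(\<forall>p\<in>Peak n u. peak_covered S p) \<longleftrightarrow> (\<forall>p\<in>Peak n u. p \<in> T)"
    using T Peak_subset[of n u] by (intro ball_cong) auto
  also have "\<dots> \<longleftrightarrow> Peak n u \<subseteq> T"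
    by blast
  finally have "(\<forall>p\<in>Peak n u. peak_covered S p) \<longleftrightarrow> Peak n u \<subseteq> T" .
  then show "psi n (X n S) u = 2 ^ k * (\<Sum>F\<in>{F. F \<in> Fn n \<and> F \<subseteq> T}. P n F u)"
    using sum_P_Peak[OF u, where Q = "\<lambda>F. F \<subseteq> T" and c = "\<lambda>_. 1"] unfolding psi_X_on_perms[OF u n S] k by simp
next
  fix u
  assume "u \<notin> perms n"
  then show "2 ^ k * (\<Sum>F\<in>{F. F \<in> Fn n \<and> F \<subseteq> T}. P n F u) = 0"
    by (simp add: P_def)
qed

theorem proposition3p6:
  fixes n :: nat
  assumes "n \<ge> 2"
  shows "(\<forall>f\<in>SigmaD n. psi n f \<in> SigmaA n) \<and>
    (\<forall>J. J \<subseteq> {2..n-1} \<longrightarrow>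
      psi n (Y n (Nd ` J)) =
        (\<lambda>u. \<Sum>F\<in>{F. F \<in> Fn n \<and> F \<subseteq> symdiff J (shift1 J)}. 2 ^ card F * P n F u)
    \<and> psi n (Y n (insert (Nd 1) (Nd ` J))) =
        (\<lambda>u. \<Sum>F\<in>{F. insert 1 F \<in> Fn n \<and> F \<subseteq> symdiff J (shift1 J)}.
               2 ^ card F * P n (insert 1 F) u)
    \<and> psi n (Y n (insert OneP (Nd ` J))) =
        (\<lambda>u. \<Sum>F\<in>{F. insert 1 F \<in> Fn n \<and> F \<subseteq> symdiff J (shift1 J)}.
               2 ^ card F * P n (insert 1 F) u)
    \<and> psi n (Y n (insert OneP (insert (Nd 1) (Nd ` J)))) =
        (\<lambda>u. \<Sum>F\<in>{F. F \<in> Fn n \<and> F \<subseteq> symdiff J (insert 2 (shift1 J))}. 2 ^ card F * P n F u)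
    \<and> psi n (X n (Nd ` J)) =
        (\<lambda>u. 2 ^ card J * (\<Sum>F\<in>{F. F \<in> Fn n \<and> F \<subseteq> J \<union> shift1 J}. P n F u))
    \<and> psi n (X n (insert (Nd 1) (Nd ` J))) =
        (\<lambda>u. 2 ^ card J * (\<Sum>F\<in>{F. F \<in> Fn n \<and> F \<subseteq> J \<union> shift1 J \<union> {1}}. P n F u))
    \<and> psi n (X n (insert OneP (Nd ` J))) =
        (\<lambda>u. 2 ^ card J * (\<Sum>F\<in>{F. F \<in> Fn n \<and> F \<subseteq> J \<union> shift1 J \<union> {1}}. P n F u))
    \<and> psi n (X n (insert OneP (insert (Nd 1) (Nd ` J)))) =
        (\<lambda>u. 2 ^ (card J + 1) * (\<Sum>F\<in>{F. F \<in> Fn n \<and> F \<subseteq> J \<union> shift1 J \<union> {1, 2}}. P n F u)))"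
  apply (intro conjI allI impI)
  subgoal
    using psi_SigmaD_in_SigmaA[OF assms] by blast
  subgoal premises J for J
    by (rule psi_Y_eq_sum_P) (use assms J in auto)
  subgoal premises J for J
    by (rule psi_Y_eq_sum_P_insert1) (use assms J in auto)
  subgoal premises J for J
    by (rule psi_Y_eq_sum_P_insert1) (use assms J in auto)
  subgoal premises J for J
    by (rule psi_Y_eq_sum_P) (use assms J in auto)
  subgoal premises J for J
    by (rule psi_X_eq_sum_P) (use assms J finite_subset[OF J] in \<open>auto simp: peak_covered_def subset_iff card_insert_if\<close>)
  subgoal premises J for J
    by (rule psi_X_eq_sum_P) (use assms J finite_subset[OF J] in \<open>auto simp: peak_covered_def subset_iff card_insert_if\<close>)
  subgoal premises J for J
    by (rule psi_X_eq_sum_P) (use assms J finite_subset[OF J] in \<open>auto simp: peak_covered_def subset_iff card_insert_if\<close>)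
  subgoal premises J for J
    by (rule psi_X_eq_sum_P) (use assms J finite_subset[OF J] in \<open>auto simp: peak_covered_def subset_iff card_insert_if\<close>)
  done

end
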